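(* Let $\mathfrak{X}=(X,\{R_0,R_1,R_2,R_3,R_4\})$ be a $4$-class association scheme with $R_1^\top=R_1$, $R_2^\top=R_2$ and $R_3^\top=R_4$. Let $\tilde R_3=R_3\cup R_4$ and $\Gamma^{(3)}=(X,\tilde R_3)$. Suppose that $\Gamma^{(3)}$ is the disjoint union of $N>1$ connected strongly regular graphs, each with valency $k$, eigenvalues $k,r,s$ with $r\neq k$, $s\neq k$, and $w$ vertices. Then the digraph $(X,R_i\cup R_3)$ has $5$ distinct eigenvalues for some $i\in\{1,2,3\}$.
   Context: An association scheme on a finite set $X$ is a partition of $X\times X$ into relations $R_0$ (diagonal), $R_1,\dots,R_d$ closed under transposition, with constant intersection numbers $p^l_{i,j}$. A strongly regular graph is a regular graph, neither complete nor edgeless, in which any two adjacent vertices have a constant number $\lambda$ of common neighbours and any two distinct nonadjacent vertices a constant number $\mu$. Eigenvalues of a (di)graph $(X,R)$ are those of its $01$ adjacency matrix. *)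

theory Defs
  imports Complex_Main
begin

definition assoc_scheme :: "'a set \<Rightarrow> nat \<Rightarrow> (nat \<Rightarrow> ('a \<times> 'a) set) \<Rightarrow> bool" where
  "assoc_scheme X d R \<longleftrightarrow>
     finite X \<and>
     (\<forall>i\<le>d. R i \<noteq> {} \<and> R i \<subseteq> X \<times> X) \<and>
     (\<Union>i\<in>{..d}. R i) = X \<times> X \<and>
     (\<forall>i\<le>d. \<forall>j\<le>d. i \<noteq> j \<longrightarrow> R i \<inter> R j = {}) \<and>
     R 0 = Id_on X \<and>
     (\<forall>i\<le>d. \<exists>j\<le>d. (R i)\<inverse> = R j) \<and>
     (\<forall>i\<le>d. \<forall>j\<le>d. \<forall>l\<le>d. \<exists>p::nat. \<forall>(x, y)\<in>R l.
        card {z\<in>X. (x, z) \<in> R i \<and> (z, y) \<in> R j} = p)"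

definition adj_eigenvalues :: "'a set \<Rightarrow> ('a \<times> 'a) set \<Rightarrow> complex set" where
  "adj_eigenvalues V E = {\<mu>. \<exists>v :: 'a \<Rightarrow> complex. (\<exists>x\<in>V. v x \<noteq> 0) \<and>
      (\<forall>x\<in>V. (\<Sum>y\<in>V. if (x, y) \<in> E then v y else 0) = \<mu> * v x)}"

definition srg_valency :: "'a set \<Rightarrow> ('a \<times> 'a) set \<Rightarrow> nat \<Rightarrow> bool" where
  "srg_valency V E k \<longleftrightarrow>
     finite V \<and> E \<subseteq> V \<times> V \<and> sym E \<and> irrefl E \<and>
     (\<forall>x\<in>V. card {y\<in>V. (x, y) \<in> E} = k) \<and>
     (\<exists>x\<in>V. \<exists>y\<in>V. x \<noteq> y \<and> (x, y) \<notin> E) \<and>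
     E \<noteq> {} \<and>
     (\<exists>lam mu :: nat.
        (\<forall>x\<in>V. \<forall>y\<in>V. (x, y) \<in> E \<longrightarrow> card {z\<in>V. (x, z) \<in> E \<and> (y, z) \<in> E} = lam) \<and>
        (\<forall>x\<in>V. \<forall>y\<in>V. x \<noteq> y \<and> (x, y) \<notin> E \<longrightarrow> card {z\<in>V. (x, z) \<in> E \<and> (y, z) \<in> E} = mu))"

definition graph_connected :: "'a set \<Rightarrow> ('a \<times> 'a) set \<Rightarrow> bool" where
  "graph_connected V E \<longleftrightarrow> (\<forall>x\<in>V. \<forall>y\<in>V. (x, y) \<in> (E \<inter> V \<times> V)\<^sup>*)"

definition disjoint_union_of :: "'a set \<Rightarrow> ('a \<times> 'a) set \<Rightarrow> 'a set set \<Rightarrow> bool" where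
  "disjoint_union_of X E Cs \<longleftrightarrow>
     \<Union>Cs = X \<and> (\<forall>C\<in>Cs. C \<noteq> {}) \<and>
     (\<forall>C\<in>Cs. \<forall>D\<in>Cs. C \<noteq> D \<longrightarrow> C \<inter> D = {}) \<and>
     E = (\<Union>C\<in>Cs. E \<inter> C \<times> C)"

end

theory Submission
  imports Defs "HOL-Library.Disjoint_Sets"
begin

text \<open>
  Let \<open>W\<close> be the relation "same component of \<open>\<Gamma>\<^sup>(\<^sup>3\<^sup>)\<close>". By connectivity \<open>W\<close> is the reflexive
  transitive closure of \<open>R\<^sub>3 \<union> R\<^sub>4\<close>, hence a union of classes of the scheme. As there are several
  components and none is complete, one of \<open>R\<^sub>1\<close>, \<open>R\<^sub>2\<close>, say \<open>R\<^sub>i\<close>, consists of the pairs in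
  different components, and the other one, \<open>R\<^sub>j\<close>, of the non-adjacent pairs inside a component.

  On the space \<open>U\<close> of vectors summing to zero on every component, \<open>A\<^sub>i\<close> vanishes and
  \<open>A\<^sub>j = - I - A\<^sub>3 - A\<^sub>4\<close>, so \<open>S = A\<^sub>3 + A\<^sub>4\<close> and \<open>T = A\<^sub>3 - A\<^sub>4\<close> satisfy
  \<open>S\<^sup>2, T\<^sup>2 \<in> span {I, S}\<close> and \<open>S T = T S = \<gamma> T\<close> on \<open>U\<close>. The self-adjoint \<open>S\<close> is not scalar on \<open>U\<close>,
  so it has exactly two eigenvalues \<open>r \<noteq> \<gamma>\<close> there; the skew-adjoint \<open>T\<close> vanishes on the
  \<open>r\<close>-eigenspace and squares to a negative scalar \<open>\<tau>\<close> on the \<open>\<gamma>\<close>-eigenspace. Hence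
  \<open>A\<^sub>3 = (S + T) / 2\<close> has the three eigenvalues \<open>r / 2\<close> and \<open>(\<gamma> \<plusminus> \<i> sqrt (- \<tau>)) / 2\<close> on \<open>U\<close>.
  On vectors constant on components, \<open>A\<^sub>i + A\<^sub>3\<close> has the eigenvalues \<open>|X| - w + K\<close> and
  \<open>K - w\<close>, where \<open>K\<close> is the valency of \<open>R\<^sub>3\<close>; both exceed \<open>K\<close>, a bound for the eigenvalues of
  \<open>A\<^sub>3\<close>, in modulus. So \<open>A\<^sub>i + A\<^sub>3\<close> has five eigenvalues.
\<close>

section \<open>Adjacency operators\<close>

definition adj_op :: "'a set \<Rightarrow> ('a \<times> 'a) set \<Rightarrow> ('a \<Rightarrow> complex) \<Rightarrow> 'a \<Rightarrow> complex" where
  "adj_op V E v x = (\<Sum>y\<in>V. if (x, y) \<in> E then v y else 0)"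

lemma adj_eigenvalues_eq:
  "adj_eigenvalues V E = {\<mu>. \<exists>v. (\<exists>x\<in>V. v x \<noteq> 0) \<and> (\<forall>x\<in>V. adj_op V E v x = \<mu> * v x)}"
  by (simp add: adj_eigenvalues_def adj_op_def)

lemma adj_op_lincomb:
  "adj_op V E (\<lambda>y. a * f y + b * g y) x = a * adj_op V E f x + b * adj_op V E g x"
  unfolding adj_op_def sum_distrib_left sum.distrib[symmetric] by (rule sum.cong) auto

lemma adj_op_add: "adj_op V E (\<lambda>y. f y + g y) x = adj_op V E f x + adj_op V E g x"
  using adj_op_lincomb[of V E 1 f 1 g x] by simp

lemma adj_op_diff: "adj_op V E (\<lambda>y. f y - g y) x = adj_op V E f x - adj_op V E g x"
  using adj_op_lincomb[of V E 1 f "- 1" g x] by simp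

lemma adj_op_cnj: "adj_op V E (\<lambda>y. cnj (f y)) x = cnj (adj_op V E f x)"
  unfolding adj_op_def cnj_sum by (intro sum.cong) auto

lemma adj_op_cong: "(\<And>y. y \<in> V \<Longrightarrow> f y = g y) \<Longrightarrow> adj_op V E f x = adj_op V E g x"
  unfolding adj_op_def by (rule sum.cong) auto

lemma adj_op_Un:
  assumes "E \<inter> F = {}"
  shows "adj_op V (E \<union> F) v x = adj_op V E v x + adj_op V F v x"
  unfolding adj_op_def sum.distrib[symmetric] by (rule sum.cong) (use assms in auto)

lemma adj_op_indicator:
  assumes "finite V" "a \<in> V"
  shows "adj_op V E (\<lambda>y. if y = a then 1 else 0) x = (if (x, a) \<in> E then 1 else 0)"
proof -
  have "adj_op V E (\<lambda>y. if y = a then 1 else 0) x = (\<Sum>y\<in>V. if y = a then (if (x, a) \<in> E then 1 else 0) else 0)"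
    unfolding adj_op_def by (rule sum.cong) auto
  then show ?thesis using assms by simp
qed

lemma adj_op_const:
  assumes "finite V"
  shows "adj_op V E (\<lambda>_. c) x = of_nat (card {y\<in>V. (x, y) \<in> E}) * c"
  unfolding adj_op_def using assms by (simp add: sum.If_cases Int_def)

lemma norm_adj_op_le:
  fixes m :: real
  assumes "finite V" and bound: "\<And>y. y \<in> V \<Longrightarrow> cmod (v y) \<le> m"
  shows "cmod (adj_op V E v x) \<le> card {y\<in>V. (x, y) \<in> E} * m"
proof -
  have "cmod (adj_op V E v x) \<le> (\<Sum>y\<in>V. if (x, y) \<in> E then m else 0)"
    unfolding adj_op_def by (rule order_trans[OF norm_sum sum_mono]) (simp add: bound)
  also have "\<dots> = card {y\<in>V. (x, y) \<in> E} * m"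
    using assms(1) by (simp add: sum.If_cases Int_def)
  finally show ?thesis .
qed

definition inner_on :: "'a set \<Rightarrow> ('a \<Rightarrow> complex) \<Rightarrow> ('a \<Rightarrow> complex) \<Rightarrow> complex" where
  "inner_on V u v = (\<Sum>x\<in>V. u x * cnj (v x))"

lemma inner_on_lincomb_left:
  "inner_on V (\<lambda>y. a * f y + b * g y) h = a * inner_on V f h + b * inner_on V g h"
  unfolding inner_on_def by (simp add: algebra_simps sum.distrib sum_distrib_left)

lemma inner_on_lincomb_right:
  "inner_on V h (\<lambda>y. a * f y + b * g y) = cnj a * inner_on V h f + cnj b * inner_on V h g"
  unfolding inner_on_def by (simp add: algebra_simps sum.distrib sum_distrib_left)

lemma inner_on_scale_left: "inner_on V (\<lambda>y. c * f y) h = c * inner_on V f h"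
  using inner_on_lincomb_left[of V c f 0 f h] by simp

lemma inner_on_scale_right: "inner_on V h (\<lambda>y. c * f y) = cnj c * inner_on V h f"
  using inner_on_lincomb_right[of V h c f 0 f] by simp

lemma inner_on_add_left: "inner_on V (\<lambda>y. f y + g y) h = inner_on V f h + inner_on V g h"
  using inner_on_lincomb_left[of V 1 f 1 g h] by simp

lemma inner_on_diff_left: "inner_on V (\<lambda>y. f y - g y) h = inner_on V f h - inner_on V g h"
  using inner_on_lincomb_left[of V 1 f "- 1" g h] by simp

lemma inner_on_add_right: "inner_on V h (\<lambda>y. f y + g y) = inner_on V h f + inner_on V h g"
  using inner_on_lincomb_right[of V h 1 f 1 g] by simp

lemma inner_on_diff_right: "inner_on V h (\<lambda>y. f y - g y) = inner_on V h f - inner_on V h g"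
  using inner_on_lincomb_right[of V h 1 f "- 1" g] by simp

lemma inner_on_cong:
  "(\<And>x. x \<in> V \<Longrightarrow> f x = f' x) \<Longrightarrow> (\<And>x. x \<in> V \<Longrightarrow> g x = g' x) \<Longrightarrow>
    inner_on V f g = inner_on V f' g'"
  unfolding inner_on_def by (rule sum.cong) auto

lemma inner_on_self: "inner_on V v v = of_real (\<Sum>x\<in>V. (cmod (v x))\<^sup>2)"
  unfolding inner_on_def of_real_sum complex_norm_square ..

lemma inner_on_self_pos:
  assumes "finite V" "x \<in> V" "v x \<noteq> 0"
  shows "\<exists>t>0. inner_on V v v = of_real t"
proof -
  have "0 < (cmod (v x))\<^sup>2" using assms by simp
  also have "\<dots> \<le> (\<Sum>x\<in>V. (cmod (v x))\<^sup>2)" using assms by (intro member_le_sum) auto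
  finally show ?thesis unfolding inner_on_self by blast
qed

lemma inner_on_adj_op:
  "inner_on V (adj_op V E f) g = inner_on V f (adj_op V (E\<inverse>) g)"
proof -
  have "inner_on V (adj_op V E f) g = (\<Sum>x\<in>V. \<Sum>y\<in>V. if (x, y) \<in> E then f y * cnj (g x) else 0)"
    unfolding inner_on_def adj_op_def sum_distrib_right by (intro sum.cong) auto
  also have "\<dots> = (\<Sum>y\<in>V. \<Sum>x\<in>V. if (x, y) \<in> E then f y * cnj (g x) else 0)"
    by (rule sum.swap)
  also have "\<dots> = inner_on V f (adj_op V (E\<inverse>) g)"
    unfolding inner_on_def adj_op_def cnj_sum sum_distrib_left by (intro sum.cong) auto
  finally show ?thesis .
qed

section \<open>Partitions into blocks\<close>

definition same_block :: "'a set set \<Rightarrow> ('a \<times> 'a) set" where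
  "same_block Cs = {(x, y). \<exists>C\<in>Cs. x \<in> C \<and> y \<in> C}"

lemma same_block_trans:
  assumes "partition_on X Cs" "(x, y) \<in> same_block Cs" "(y, z) \<in> same_block Cs"
  shows "(x, z) \<in> same_block Cs"
  using assms unfolding same_block_def partition_on_def disjoint_def by blast

lemma rtrancl_same_block:
  assumes partition: "partition_on X Cs" and E: "E \<subseteq> same_block Cs"
    and xy: "(x, y) \<in> E\<^sup>*" and x: "x \<in> X"
  shows "(x, y) \<in> same_block Cs"
  using xy
proof (induction rule: rtrancl_induct)
  case base
  then show ?case using partition x unfolding same_block_def partition_on_def by blast
next
  case (step y z)
  then show ?case using E same_block_trans[OF partition] by blast
qed

lemma disjoint_union_of_partition:
  assumes "disjoint_union_of X E Cs"
  shows "partition_on X Cs" and "E \<subseteq> same_block Cs"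
proof -
  have blocks: "\<Union>Cs = X" "\<And>C. C \<in> Cs \<Longrightarrow> C \<noteq> {}"
      "\<And>C D. C \<in> Cs \<Longrightarrow> D \<in> Cs \<Longrightarrow> C \<noteq> D \<Longrightarrow> C \<inter> D = {}"
    and E_union: "E \<subseteq> (\<Union>C\<in>Cs. E \<inter> C \<times> C)"
    using assms unfolding disjoint_union_of_def by (blast, blast, blast, simp)
  show "partition_on X Cs"
    using blocks by (intro partition_onI) (auto simp: disjnt_def)
  show "E \<subseteq> same_block Cs"
  proof
    fix p assume "p \<in> E"
    then obtain C where "C \<in> Cs" "p \<in> C \<times> C" using E_union by blast
    then show "p \<in> same_block Cs" unfolding same_block_def by auto
  qed
qed

lemma srg_valency_non_complete:
  assumes "srg_valency V E k"
  shows "\<exists>x\<in>V. \<exists>y\<in>V. x \<noteq> y \<and> (x, y) \<notin> E"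
  using assms unfolding srg_valency_def by (elim conjE) assumption

lemma two_le_card_obtains:
  assumes "2 \<le> card A"
  obtains a b where "a \<in> A" "b \<in> A" "a \<noteq> b"
proof -
  have "finite A" using assms card.infinite by force
  then show thesis using that assms card_le_Suc0_iff_eq[of A] by force
qed

section \<open>Association schemes\<close>

locale association_scheme =
  fixes X :: "'a set" and d :: nat and R :: "nat \<Rightarrow> ('a \<times> 'a) set"
  assumes scheme: "assoc_scheme X d R"
begin

lemma finite_X: "finite X"
  using scheme by (simp add: assoc_scheme_def)

lemma R_nonempty: "l \<le> d \<Longrightarrow> R l \<noteq> {}"
  and R_subset: "l \<le> d \<Longrightarrow> R l \<subseteq> X \<times> X"
  and R_converse: "l \<le> d \<Longrightarrow> \<exists>l'\<le>d. (R l)\<inverse> = R l'"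
  using scheme by (simp_all add: assoc_scheme_def)

lemma R_0: "R 0 = Id_on X"
  using scheme by (simp add: assoc_scheme_def)

lemma R_cover: "x \<in> X \<Longrightarrow> y \<in> X \<Longrightarrow> \<exists>l\<le>d. (x, y) \<in> R l"
  using scheme unfolding assoc_scheme_def by (metis (no_types, lifting) SigmaI UN_E atMost_iff)

lemma R_unique: "l \<le> d \<Longrightarrow> m \<le> d \<Longrightarrow> (x, y) \<in> R l \<Longrightarrow> (x, y) \<in> R m \<Longrightarrow> l = m"
  using scheme unfolding assoc_scheme_def by (metis disjoint_iff)

lemma X_nonempty: "X \<noteq> {}"
  using R_nonempty[of 0] R_0 by auto

definition isect :: "nat \<Rightarrow> nat \<Rightarrow> nat \<Rightarrow> nat" where
  "isect a b l = (SOME p. \<forall>(x, y)\<in>R l. card {z\<in>X. (x, z) \<in> R a \<and> (z, y) \<in> R b} = p)"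

lemma card_isect:
  assumes "a \<le> d" "b \<le> d" "l \<le> d" "(x, y) \<in> R l"
  shows "card {z\<in>X. (x, z) \<in> R a \<and> (z, y) \<in> R b} = isect a b l"
proof -
  have "\<exists>p. \<forall>(x, y)\<in>R l. card {z\<in>X. (x, z) \<in> R a \<and> (z, y) \<in> R b} = p"
    using scheme assms(1-3) unfolding assoc_scheme_def by blast
  from someI_ex[OF this] show ?thesis using assms(4) unfolding isect_def by auto
qed

definition valency :: "nat \<Rightarrow> nat" where
  "valency l = isect l (SOME l'. l' \<le> d \<and> R l' = (R l)\<inverse>) 0"

lemma card_R_row:
  assumes l: "l \<le> d" and x: "x \<in> X"
  shows "card {y\<in>X. (x, y) \<in> R l} = valency l"
proof -
  define l' where "l' = (SOME l'. l' \<le> d \<and> R l' = (R l)\<inverse>)"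
  have l': "l' \<le> d" "R l' = (R l)\<inverse>"
    unfolding l'_def using someI_ex[of "\<lambda>l'. l' \<le> d \<and> R l' = (R l)\<inverse>"] R_converse[OF l] by auto
  have "{y\<in>X. (x, y) \<in> R l} = {z\<in>X. (x, z) \<in> R l \<and> (z, x) \<in> R l'}"
    using l'(2) by auto
  also have "card \<dots> = valency l"
    unfolding valency_def l'_def[symmetric] using l l' x R_0 by (intro card_isect) auto
  finally show ?thesis .
qed

lemma isect_valency:
  assumes "a \<le> d" "b \<le> d" "R b = (R a)\<inverse>"
  shows "isect a b 0 = valency a"
proof -
  obtain x where x: "x \<in> X" using X_nonempty by blast
  have "isect a b 0 = card {z\<in>X. (x, z) \<in> R a \<and> (z, x) \<in> R b}"
    using assms x R_0 by (intro card_isect[symmetric]) auto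
  also have "{z\<in>X. (x, z) \<in> R a \<and> (z, x) \<in> R b} = {y\<in>X. (x, y) \<in> R a}" using assms(3) by auto
  finally show ?thesis using card_R_row[OF assms(1) x] by simp
qed

lemma valency_pos: "l \<le> d \<Longrightarrow> 0 < valency l"
proof -
  assume l: "l \<le> d"
  obtain x y where xy: "(x, y) \<in> R l" using R_nonempty[OF l] by auto
  then have x: "x \<in> X" and "{y\<in>X. (x, y) \<in> R l} \<noteq> {}" using R_subset[OF l] by auto
  then have "card {y\<in>X. (x, y) \<in> R l} \<noteq> 0" using finite_X by simp
  then show ?thesis using card_R_row[OF l x] by simp
qed

lemma card_R: "l \<le> d \<Longrightarrow> card (R l) = card X * valency l"
proof -
  assume l: "l \<le> d"
  have "R l = (SIGMA x:X. {y\<in>X. (x, y) \<in> R l})" using R_subset[OF l] by auto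
  then have "card (R l) = card (SIGMA x:X. {y\<in>X. (x, y) \<in> R l})" by (rule arg_cong)
  also have "\<dots> = (\<Sum>x\<in>X. card {y\<in>X. (x, y) \<in> R l})"
    using finite_X by (intro card_SigmaI) auto
  finally show ?thesis using card_R_row[OF l] by simp
qed

lemma valency_converse:
  assumes "a \<le> d" "b \<le> d" "R b = (R a)\<inverse>"
  shows "valency b = valency a"
  using card_R[of a] card_R[of b] assms finite_X X_nonempty by simp

lemma card_R_column:
  assumes a: "a \<le> d" and y: "y \<in> X"
  shows "card {x\<in>X. (x, y) \<in> R a} = valency a"
proof -
  obtain b where b: "b \<le> d" "(R a)\<inverse> = R b" using R_converse[OF a] by blast
  then have "{x\<in>X. (x, y) \<in> R a} = {x\<in>X. (y, x) \<in> R b}" by auto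
  then show ?thesis using card_R_row[OF b(1) y] valency_converse[OF a b(1)] b(2) by simp
qed

abbreviation A :: "nat \<Rightarrow> ('a \<Rightarrow> complex) \<Rightarrow> 'a \<Rightarrow> complex" where
  "A l \<equiv> adj_op X (R l)"

lemma A_0: "x \<in> X \<Longrightarrow> A 0 v x = v x"
  unfolding adj_op_def R_0 using finite_X by (simp add: Id_on_iff if_distrib cong: if_cong)

lemma sum_over_classes:
  assumes "l \<le> d" "(x, y) \<in> R l"
  shows "(\<Sum>m\<le>d. if (x, y) \<in> R m then c m else 0) = c l"
proof -
  have "(\<Sum>m\<le>d. if (x, y) \<in> R m then c m else 0) = (\<Sum>m\<le>d. if m = l then c m else 0)"
    using R_unique assms by (intro sum.cong) auto
  then show ?thesis using assms(1) by simp
qed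

lemma sum_A:
  assumes x: "x \<in> X"
  shows "(\<Sum>l\<le>d. A l v x) = (\<Sum>y\<in>X. v y)"
proof -
  have "(\<Sum>l\<le>d. A l v x) = (\<Sum>y\<in>X. \<Sum>l\<le>d. if (x, y) \<in> R l then v y else 0)"
    unfolding adj_op_def by (rule sum.swap)
  also have "\<dots> = (\<Sum>y\<in>X. v y)"
  proof (rule sum.cong[OF refl])
    fix y assume "y \<in> X"
    then obtain l where "l \<le> d" "(x, y) \<in> R l" using R_cover x by blast
    then show "(\<Sum>l\<le>d. if (x, y) \<in> R l then v y else 0) = v y" by (rule sum_over_classes)
  qed
  finally show ?thesis .
qed

lemma A_const: "l \<le> d \<Longrightarrow> x \<in> X \<Longrightarrow> A l (\<lambda>_. c) x = of_nat (valency l) * c"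
  using adj_op_const[OF finite_X] card_R_row by simp

lemma A_mult:
  assumes a: "a \<le> d" and b: "b \<le> d" and x: "x \<in> X"
  shows "A a (A b v) x = (\<Sum>l\<le>d. of_nat (isect a b l) * A l v x)"
proof -
  have "A a (A b v) x = (\<Sum>z\<in>X. \<Sum>y\<in>X. if (x, z) \<in> R a \<and> (z, y) \<in> R b then v y else 0)"
    unfolding adj_op_def by (intro sum.cong) (auto simp: sum.neutral)
  also have "\<dots> = (\<Sum>y\<in>X. \<Sum>z\<in>X. if (x, z) \<in> R a \<and> (z, y) \<in> R b then v y else 0)"
    by (rule sum.swap)
  also have "\<dots> = (\<Sum>y\<in>X. of_nat (card {z\<in>X. (x, z) \<in> R a \<and> (z, y) \<in> R b}) * v y)"
    using finite_X by (simp add: sum.If_cases Int_def)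
  also have "\<dots> = (\<Sum>y\<in>X. \<Sum>l\<le>d. if (x, y) \<in> R l then of_nat (isect a b l) * v y else 0)"
  proof (rule sum.cong[OF refl])
    fix y assume "y \<in> X"
    then obtain l where l: "l \<le> d" "(x, y) \<in> R l" using R_cover x by blast
    then show "of_nat (card {z\<in>X. (x, z) \<in> R a \<and> (z, y) \<in> R b}) * v y
      = (\<Sum>l\<le>d. if (x, y) \<in> R l then of_nat (isect a b l) * v y else 0)"
      using card_isect[OF a b l] sum_over_classes[OF l, of "\<lambda>l. of_nat (isect a b l) * v y"] by simp
  qed
  also have "\<dots> = (\<Sum>l\<le>d. of_nat (isect a b l) * A l v x)"
    unfolding adj_op_def sum_distrib_left by (subst sum.swap) (simp add: if_distrib cong: if_cong)
  finally show ?thesis .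
qed

lemma sum_isect_valency:
  assumes a: "a \<le> d" and b: "b \<le> d"
  shows "(\<Sum>l\<le>d. isect a b l * valency l) = valency a * valency b"
proof -
  obtain x where x: "x \<in> X" using X_nonempty by blast
  have "A a (A b (\<lambda>_. 1)) x = A a (\<lambda>_. of_nat (valency b)) x"
    by (rule adj_op_cong) (simp add: A_const b)
  also have "\<dots> = of_nat (valency a * valency b)" using A_const[OF a x] by simp
  finally have "of_nat (valency a * valency b) = (\<Sum>l\<le>d. of_nat (isect a b l) * A l (\<lambda>_. 1) x)"
    using A_mult[OF a b x] by simp
  also have "\<dots> = of_nat (\<Sum>l\<le>d. isect a b l * valency l)"
    using A_const[OF _ x] by simp
  finally show ?thesis by (simp only: of_nat_eq_iff)
qed

lemma isect_converse:
  assumes "a \<le> d" "b \<le> d" "l \<le> d" "a' \<le> d" "b' \<le> d" "l' \<le> d"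
    and "R a' = (R a)\<inverse>" "R b' = (R b)\<inverse>" "R l' = (R l)\<inverse>"
  shows "isect b' a' l' = isect a b l"
proof -
  obtain x y where xy: "(x, y) \<in> R l" using R_nonempty[OF assms(3)] by auto
  have "isect b' a' l' = card {z\<in>X. (y, z) \<in> R b' \<and> (z, x) \<in> R a'}"
    using assms xy by (intro card_isect[symmetric]) auto
  also have "{z\<in>X. (y, z) \<in> R b' \<and> (z, x) \<in> R a'} = {z\<in>X. (x, z) \<in> R a \<and> (z, y) \<in> R b}"
    using assms by auto
  also have "card \<dots> = isect a b l" using assms xy by (intro card_isect)
  finally show ?thesis .
qed

text \<open>Both sides count, per pair of \<open>R b\<close>, the transitive triangles
  \<open>u \<rightarrow> v \<rightarrow> w\<close>, \<open>u \<rightarrow> w\<close> of \<open>R a\<close>.\<close>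
lemma isect_converse_comm:
  assumes a: "a \<le> d" and b: "b \<le> d" and ab: "R b = (R a)\<inverse>"
  shows "isect a b b = isect b a b"
proof -
  define tri :: "'a \<Rightarrow> 'a \<Rightarrow> 'a \<Rightarrow> nat"
    where "tri u v w = of_bool ((u, v) \<in> R a \<and> (v, w) \<in> R a \<and> (u, w) \<in> R a)" for u v w
  have count: "(\<Sum>x\<in>X. \<Sum>y\<in>X. \<Sum>z\<in>X. of_bool ((x, y) \<in> R b \<and> (x, z) \<in> R c \<and> (z, y) \<in> R e))
      = card X * valency b * isect c e b" if c: "c \<le> d" and e: "e \<le> d" for c e
  proof -
    have "(\<Sum>z\<in>X. of_bool ((x, y) \<in> R b \<and> (x, z) \<in> R c \<and> (z, y) \<in> R e))
        = of_bool ((x, y) \<in> R b) * isect c e b" for x y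
      using card_isect[OF c e b, of x y] finite_X by (auto simp: sum.If_cases Int_def)
    then have "(\<Sum>x\<in>X. \<Sum>y\<in>X. \<Sum>z\<in>X. of_bool ((x, y) \<in> R b \<and> (x, z) \<in> R c \<and> (z, y) \<in> R e))
        = (\<Sum>x\<in>X. card {y\<in>X. (x, y) \<in> R b} * isect c e b)"
      using finite_X by (simp add: sum_distrib_right[symmetric] sum.If_cases Int_def)
    then show ?thesis using card_R_row[OF b] by (simp add: mult.commute)
  qed
  have "card X * valency b * isect a b b = (\<Sum>x\<in>X. \<Sum>y\<in>X. \<Sum>z\<in>X. tri y x z)"
    unfolding count[OF a b, symmetric] tri_def ab by (simp add: conj_ac)
  also have "\<dots> = (\<Sum>y\<in>X. \<Sum>x\<in>X. \<Sum>z\<in>X. tri y x z)" by (rule sum.swap)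
  also have "\<dots> = (\<Sum>z\<in>X. \<Sum>x\<in>X. \<Sum>y\<in>X. tri z y x)" by (intro sum.cong refl sum.swap)
  also have "\<dots> = (\<Sum>x\<in>X. \<Sum>z\<in>X. \<Sum>y\<in>X. tri z y x)" by (rule sum.swap)
  also have "\<dots> = (\<Sum>x\<in>X. \<Sum>y\<in>X. \<Sum>z\<in>X. tri z y x)" by (intro sum.cong refl sum.swap)
  also have "\<dots> = card X * valency b * isect b a b"
    unfolding count[OF b a, symmetric] tri_def ab by (simp add: conj_ac)
  finally show ?thesis using finite_X X_nonempty valency_pos[OF b] by simp
qed

lemma relpow_class_closed:
  assumes J: "J \<subseteq> {..d}" and l: "l \<le> d" and xy: "(x, y) \<in> R l" "(x', y') \<in> R l"
    and path: "(x, y) \<in> (\<Union>j\<in>J. R j) ^^ n"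
  shows "(x', y') \<in> (\<Union>j\<in>J. R j) ^^ n"
  using l xy path
proof (induction n arbitrary: l y y')
  case 0
  then have "(x, y) \<in> R 0" using R_0 R_subset by auto
  then have "l = 0" using R_unique 0 by blast
  then show ?case using 0 R_0 by auto
next
  case (Suc n)
  obtain z e where z: "(x, z) \<in> (\<Union>j\<in>J. R j) ^^ n" and e: "e \<in> J" "(z, y) \<in> R e"
    using Suc.prems(4) by auto
  have e_le: "e \<le> d" using J e(1) by auto
  have "x \<in> X" "z \<in> X" using Suc.prems(2) R_subset[OF Suc.prems(1)] e(2) R_subset[OF e_le] by auto
  then obtain m where m: "m \<le> d" "(x, z) \<in> R m" using R_cover by blast
  have "{z\<in>X. (x, z) \<in> R m \<and> (z, y) \<in> R e} \<noteq> {}" using \<open>z \<in> X\<close> m e by auto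
  then have "card {z\<in>X. (x, z) \<in> R m \<and> (z, y) \<in> R e} \<noteq> 0" using finite_X by simp
  then have "isect m e l \<noteq> 0" using card_isect[OF m(1) e_le Suc.prems(1,2)] by simp
  then have "{z\<in>X. (x', z) \<in> R m \<and> (z, y') \<in> R e} \<noteq> {}"
    using card_isect[OF m(1) e_le Suc.prems(1,3)] by (metis card.empty)
  then obtain z' where z': "(x', z') \<in> R m" "(z', y') \<in> R e" by blast
  then show ?case using Suc.IH[OF m z'(1) z] e(1) by auto
qed

lemma rtrancl_class_closed:
  assumes "J \<subseteq> {..d}" "l \<le> d" "(x, y) \<in> R l" "(x', y') \<in> R l"
    and "(x, y) \<in> (\<Union>j\<in>J. R j)\<^sup>*"
  shows "(x', y') \<in> (\<Union>j\<in>J. R j)\<^sup>*"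
  using assms relpow_class_closed by (meson rtrancl_power)

lemma class_within_blocks:
  assumes J: "J \<subseteq> {..d}" and partition: "partition_on X Cs"
    and E_blocks: "(\<Union>j\<in>J. R j) \<subseteq> same_block Cs"
    and connected: "\<And>C. C \<in> Cs \<Longrightarrow> graph_connected C ((\<Union>j\<in>J. R j) \<inter> C \<times> C)"
    and l: "l \<le> d" and xy: "(x, y) \<in> R l" "(x, y) \<in> same_block Cs"
  shows "R l \<subseteq> same_block Cs"
proof
  fix p assume p: "p \<in> R l"
  obtain x' y' where p': "p = (x', y')" by (cases p)
  obtain C where C: "C \<in> Cs" "x \<in> C" "y \<in> C" using xy(2) unfolding same_block_def by blast
  have "(x, y) \<in> ((\<Union>j\<in>J. R j) \<inter> C \<times> C \<inter> C \<times> C)\<^sup>*"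
    using connected[OF C(1)] C unfolding graph_connected_def by blast
  moreover have "((\<Union>j\<in>J. R j) \<inter> C \<times> C \<inter> C \<times> C)\<^sup>* \<subseteq> (\<Union>j\<in>J. R j)\<^sup>*"
    by (rule rtrancl_mono) blast
  ultimately have "(x', y') \<in> (\<Union>j\<in>J. R j)\<^sup>*"
    using rtrancl_class_closed[OF J l xy(1)] p p' by blast
  then show "p \<in> same_block Cs"
    using rtrancl_same_block[OF partition E_blocks] R_subset[OF l] p p' by auto
qed

end

section \<open>A self-adjoint and a skew-adjoint operator\<close>

text \<open>\<open>U\<close> is a subspace of \<open>\<complex>\<^sup>V\<close>, given by a predicate, and \<open>S\<close>, \<open>T\<close> are linear maps
  commuting with complex conjugation; only the values at points of \<open>V\<close> matter.\<close>
locale sym_skew_pair =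
  fixes V :: "'a set" and U :: "('a \<Rightarrow> complex) \<Rightarrow> bool"
    and S T :: "('a \<Rightarrow> complex) \<Rightarrow> 'a \<Rightarrow> complex"
    and p q e0 e1 g :: complex
  assumes finite_V: "finite V"
    and U_lincomb: "U f \<Longrightarrow> U h \<Longrightarrow> U (\<lambda>y. a * f y + b * h y)"
    and U_cnj: "U f \<Longrightarrow> U (\<lambda>y. cnj (f y))"
    and U_S: "U f \<Longrightarrow> U (S f)" and U_T: "U f \<Longrightarrow> U (T f)"
    and S_lincomb: "S (\<lambda>y. a * f y + b * h y) x = a * S f x + b * S h x"
    and T_lincomb: "T (\<lambda>y. a * f y + b * h y) x = a * T f x + b * T h x"
    and S_cong: "(\<And>y. y \<in> V \<Longrightarrow> f y = h y) \<Longrightarrow> S f x = S h x"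
    and T_cong: "(\<And>y. y \<in> V \<Longrightarrow> f y = h y) \<Longrightarrow> T f x = T h x"
    and S_cnj: "S (\<lambda>y. cnj (f y)) x = cnj (S f x)"
    and T_cnj: "T (\<lambda>y. cnj (f y)) x = cnj (T f x)"
    and S_self_adjoint: "inner_on V (S f) h = inner_on V f (S h)"
    and T_skew_adjoint: "inner_on V (T f) h = - inner_on V f (T h)"
    and S_S: "U f \<Longrightarrow> x \<in> V \<Longrightarrow> S (S f) x = p * S f x + q * f x"
    and T_T: "U f \<Longrightarrow> x \<in> V \<Longrightarrow> T (T f) x = e0 * f x + e1 * S f x"
    and S_T: "U f \<Longrightarrow> x \<in> V \<Longrightarrow> S (T f) x = g * T f x"
    and T_S: "U f \<Longrightarrow> x \<in> V \<Longrightarrow> T (S f) x = g * T f x"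
    and S_not_scalar: "\<nexists>c. \<forall>f. U f \<longrightarrow> (\<forall>x\<in>V. S f x = c * f x)"
    and T_nonzero: "\<exists>f. U f \<and> (\<exists>x\<in>V. T f x \<noteq> 0)"
begin

definition U_eigenvalues :: "(('a \<Rightarrow> complex) \<Rightarrow> 'a \<Rightarrow> complex) \<Rightarrow> complex set" where
  "U_eigenvalues F = {\<mu>. \<exists>f. U f \<and> (\<exists>x\<in>V. f x \<noteq> 0) \<and> (\<forall>x\<in>V. F f x = \<mu> * f x)}"

definition M :: "('a \<Rightarrow> complex) \<Rightarrow> 'a \<Rightarrow> complex" where
  "M f x = (S f x + T f x) / 2"

lemma S_scale: "S (\<lambda>y. c * f y) x = c * S f x"
  using S_lincomb[of c f 0 f x] by simp

lemma T_scale: "T (\<lambda>y. c * f y) x = c * T f x"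
  using T_lincomb[of c f 0 f x] by simp

lemma M_lincomb: "M (\<lambda>y. a * f y + b * h y) x = a * M f x + b * M h x"
  unfolding M_def S_lincomb T_lincomb by (simp add: field_simps)

lemma inner_on_self_neq_0: "x \<in> V \<Longrightarrow> f x \<noteq> 0 \<Longrightarrow> inner_on V f f \<noteq> 0"
  using inner_on_self_pos[OF finite_V] by fastforce

lemma S_eigenvalue_real:
  assumes "\<mu> \<in> U_eigenvalues S"
  shows "cnj \<mu> = \<mu>"
proof -
  obtain f x where f: "x \<in> V" "f x \<noteq> 0" and Sf: "\<And>y. y \<in> V \<Longrightarrow> S f y = \<mu> * f y"
    using assms unfolding U_eigenvalues_def by auto
  have "\<mu> * inner_on V f f = inner_on V (\<lambda>y. \<mu> * f y) f" by (rule inner_on_scale_left[symmetric])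
  also have "\<dots> = inner_on V (S f) f" by (rule inner_on_cong) (simp_all add: Sf)
  also have "\<dots> = inner_on V f (S f)" by (rule S_self_adjoint)
  also have "\<dots> = inner_on V f (\<lambda>y. \<mu> * f y)" by (rule inner_on_cong) (simp_all add: Sf)
  also have "\<dots> = cnj \<mu> * inner_on V f f" by (rule inner_on_scale_right)
  finally show ?thesis using inner_on_self_neq_0[of x f, OF f] by (metis mult_right_cancel)
qed

text \<open>If \<open>(S - c)\<^sup>2 = 0\<close> on \<open>U\<close> with \<open>c\<close> real, then \<open>S f - c f\<close> is orthogonal to itself.\<close>
lemma S_shift_square_nonzero:
  assumes c: "cnj c = c"
    and SS: "\<And>f x. U f \<Longrightarrow> x \<in> V \<Longrightarrow> S (S f) x = 2 * c * S f x - c\<^sup>2 * f x"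
  shows False
proof -
  have "\<forall>x\<in>V. S f x = c * f x" if f: "U f" for f
  proof -
    define u where "u = (\<lambda>y. 1 * S f y + (- c) * f y)"
    have Su: "S u x = c * u x" if "x \<in> V" for x
      unfolding u_def S_lincomb SS[OF f that] by (simp add: power2_eq_square algebra_simps)
    have "inner_on V u u = inner_on V (S f) u - c * inner_on V f u"
      unfolding u_def inner_on_lincomb_left by simp
    also have "inner_on V (S f) u = inner_on V f (\<lambda>y. c * u y)"
      unfolding S_self_adjoint by (rule inner_on_cong) (simp_all add: Su)
    also have "\<dots> = cnj c * inner_on V f u" by (rule inner_on_scale_right)
    finally have u0: "inner_on V u u = 0" using c by simp
    show ?thesis
    proof
      fix x assume "x \<in> V"
      then have "u x = 0" using u0 inner_on_self_neq_0 by blast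
      then show "S f x = c * f x" unfolding u_def by simp
    qed
  qed
  then show False using S_not_scalar by blast
qed

lemma S_eigenvalue_of_factor:
  assumes SS: "\<And>f x. U f \<Longrightarrow> x \<in> V \<Longrightarrow> S (S f) x = (a + b) * S f x - a * b * f x"
  shows "b \<in> U_eigenvalues S"
proof (rule ccontr)
  assume b: "b \<notin> U_eigenvalues S"
  have "\<forall>x\<in>V. S f x = a * f x" if f: "U f" for f
  proof
    fix x assume x: "x \<in> V"
    define u where "u = (\<lambda>y. 1 * S f y + (- a) * f y)"
    have "U u" unfolding u_def by (intro U_lincomb U_S f)
    moreover have "\<forall>y\<in>V. S u y = b * u y"
      unfolding u_def S_lincomb using SS[OF f] by (simp add: algebra_simps)
    ultimately have "u x = 0" using b x unfolding U_eigenvalues_def by blast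
    then show "S f x = a * f x" unfolding u_def by simp
  qed
  then show False using S_not_scalar by blast
qed

lemma g_S_eigenvalue: "g \<in> U_eigenvalues S"
  using T_nonzero U_T S_T unfolding U_eigenvalues_def by blast

definition r :: complex where
  "r = p - g"

text \<open>Evaluating the quadratic relation on an eigenvector for \<open>g\<close> gives \<open>q = - r g\<close>.\<close>
lemma S_S_factor:
  assumes "U f" "x \<in> V"
  shows "S (S f) x = (r + g) * S f x - r * g * f x"
proof -
  obtain w y where w: "U w" "y \<in> V" "w y \<noteq> 0" and Sw: "\<And>y. y \<in> V \<Longrightarrow> S w y = g * w y"
    using g_S_eigenvalue unfolding U_eigenvalues_def by auto
  have "S (S w) y = S (\<lambda>y. g * w y) y" by (rule S_cong) (rule Sw)
  then have "g * (g * w y) = p * (g * w y) + q * w y"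
    using S_S[OF w(1,2)] by (simp add: S_scale Sw[OF w(2)])
  then have "(g * g - p * g - q) * w y = 0" by (simp add: algebra_simps)
  then have "g * g - p * g - q = 0" using w(3) by simp
  then have q: "q = - r * g" unfolding r_def by (simp add: algebra_simps)
  show ?thesis using S_S[OF assms] unfolding q r_def by (simp add: algebra_simps)
qed

lemma g_real: "cnj g = g"
  using S_eigenvalue_real[OF g_S_eigenvalue] .

lemma r_S_eigenvalue: "r \<in> U_eigenvalues S"
  using S_eigenvalue_of_factor[of g r] S_S_factor by (simp add: add.commute mult.commute)

lemma r_real: "cnj r = r"
  using S_eigenvalue_real[OF r_S_eigenvalue] .

lemma r_neq_g: "r \<noteq> g"
proof
  assume "r = g"
  then show False
    using S_shift_square_nonzero[OF g_real] S_S_factor by (simp add: power2_eq_square)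
qed

lemma T_vanishes_on_r:
  assumes f: "U f" and Sf: "\<And>y. y \<in> V \<Longrightarrow> S f y = r * f y" and x: "x \<in> V"
  shows "T f x = 0"
proof -
  have "g * T f x = T (S f) x" using T_S[OF f x] by simp
  also have "\<dots> = T (\<lambda>y. r * f y) x" by (rule T_cong) (rule Sf)
  also have "\<dots> = r * T f x" by (rule T_scale)
  finally have "(g - r) * T f x = 0" by (simp add: algebra_simps)
  then show ?thesis using r_neq_g by simp
qed

definition proj_r :: "('a \<Rightarrow> complex) \<Rightarrow> 'a \<Rightarrow> complex" where
  "proj_r f = (\<lambda>y. (1 / (r - g)) * S f y + (- g / (r - g)) * f y)"

definition proj_g :: "('a \<Rightarrow> complex) \<Rightarrow> 'a \<Rightarrow> complex" where
  "proj_g f = (\<lambda>y. (- 1 / (r - g)) * S f y + (r / (r - g)) * f y)"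

lemma proj_r_add_proj_g: "proj_r f x + proj_g f x = f x"
proof -
  have "proj_r f x + proj_g f x = (r - g) / (r - g) * f x"
    unfolding proj_r_def proj_g_def by (simp add: field_simps)
  then show ?thesis using r_neq_g by simp
qed

lemma U_proj_r: "U f \<Longrightarrow> U (proj_r f)" and U_proj_g: "U f \<Longrightarrow> U (proj_g f)"
  unfolding proj_r_def proj_g_def by (intro U_lincomb U_S; assumption)+

lemma S_proj_r: "U f \<Longrightarrow> x \<in> V \<Longrightarrow> S (proj_r f) x = r * proj_r f x"
  and S_proj_g: "U f \<Longrightarrow> x \<in> V \<Longrightarrow> S (proj_g f) x = g * proj_g f x"
  using r_neq_g unfolding proj_r_def proj_g_def S_lincomb
  by (simp_all add: S_S_factor field_simps)

lemma M_S_commute: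
  assumes "U f" "x \<in> V"
  shows "M (S f) x = S (M f) x"
proof -
  have "S (M f) x = S (\<lambda>y. (1/2) * S f y + (1/2) * T f y) x"
    by (rule S_cong) (simp add: M_def)
  then show ?thesis unfolding M_def S_lincomb using S_T[OF assms] T_S[OF assms] by simp
qed

lemma M_eigenvector_proj:
  assumes f: "U f" and Mf: "\<And>y. y \<in> V \<Longrightarrow> M f y = \<mu> * f y" and x: "x \<in> V"
  shows "M (proj_r f) x = \<mu> * proj_r f x" and "M (proj_g f) x = \<mu> * proj_g f x"
proof -
  have MS: "M (S f) x = \<mu> * S f x"
    using M_S_commute[OF f x] S_cong[of "M f" "\<lambda>y. \<mu> * f y"] Mf S_scale by simp
  show "M (proj_r f) x = \<mu> * proj_r f x" "M (proj_g f) x = \<mu> * proj_g f x"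
    unfolding proj_r_def proj_g_def M_lincomb MS Mf[OF x] by (simp_all add: algebra_simps)
qed

lemma M_on_r: "U f \<Longrightarrow> (\<And>y. y \<in> V \<Longrightarrow> S f y = r * f y) \<Longrightarrow> x \<in> V \<Longrightarrow> M f x = r / 2 * f x"
  unfolding M_def using T_vanishes_on_r by simp

lemma r_half_M_eigenvalue: "r / 2 \<in> U_eigenvalues M"
  using r_S_eigenvalue M_on_r unfolding U_eigenvalues_def by blast

definition tau :: complex where
  "tau = e0 + e1 * g"

lemma T_T_on_g:
  "U f \<Longrightarrow> (\<And>y. y \<in> V \<Longrightarrow> S f y = g * f y) \<Longrightarrow> x \<in> V \<Longrightarrow> T (T f) x = tau * f x"
  unfolding tau_def using T_T by (simp add: algebra_simps)

lemma M_eigenvalue_cases: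
  assumes "\<mu> \<in> U_eigenvalues M"
  shows "\<mu> = r / 2 \<or> (2 * \<mu> - g)\<^sup>2 = tau"
proof -
  obtain f x where f: "U f" "x \<in> V" "f x \<noteq> 0" and Mf: "\<And>y. y \<in> V \<Longrightarrow> M f y = \<mu> * f y"
    using assms unfolding U_eigenvalues_def by auto
  consider "proj_r f x \<noteq> 0" | "proj_g f x \<noteq> 0" using proj_r_add_proj_g[of f x] f(3) by force
  then show ?thesis
  proof cases
    case 1
    have "\<mu> * proj_r f x = r / 2 * proj_r f x"
      using M_eigenvector_proj(1)[OF f(1) Mf f(2)] M_on_r[OF U_proj_r[OF f(1)] S_proj_r[OF f(1)] f(2)]
      by (rule trans[OF sym])
    then show ?thesis using 1 mult_right_cancel by blast
  next
    case 2
    define w where "w = proj_g f"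
    have w: "U w" and Sw: "\<And>y. y \<in> V \<Longrightarrow> S w y = g * w y"
      unfolding w_def using U_proj_g S_proj_g f(1) by auto
    have Tw: "T w y = (2 * \<mu> - g) * w y" if "y \<in> V" for y
      using M_eigenvector_proj(2)[OF f(1) Mf that] Sw[OF that]
      unfolding w_def[symmetric] M_def by (simp add: field_simps)
    have "tau * w x = T (T w) x" using T_T_on_g[OF w Sw f(2)] by simp
    also have "\<dots> = T (\<lambda>y. (2 * \<mu> - g) * w y) x" by (rule T_cong) (rule Tw)
    also have "\<dots> = (2 * \<mu> - g) * T w x" by (rule T_scale)
    also have "\<dots> = (2 * \<mu> - g)\<^sup>2 * w x" using Tw[OF f(2)] by (simp add: power2_eq_square)
    finally show ?thesis using 2 unfolding w_def by simp
  qed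
qed

lemma g_vector_with_T_nonzero:
  obtains w x where "U w" "\<And>y. y \<in> V \<Longrightarrow> S w y = g * w y" "x \<in> V" "T w x \<noteq> 0"
proof -
  obtain f x where f: "U f" "x \<in> V" "T f x \<noteq> 0" using T_nonzero by blast
  have "T f x = T (\<lambda>y. 1 * proj_r f y + 1 * proj_g f y) x"
    by (rule T_cong) (simp add: proj_r_add_proj_g)
  also have "\<dots> = T (proj_g f) x"
    unfolding T_lincomb using T_vanishes_on_r[OF U_proj_r S_proj_r] f by simp
  finally have "T (proj_g f) x \<noteq> 0" using f(3) by simp
  then show thesis using that[of "proj_g f" x] U_proj_g[OF f(1)] S_proj_g[OF f(1)] f(2) by blast
qed

text \<open>Skew-adjointness: \<open>\<langle>T w, T w\<rangle> = - \<langle>w, T (T w)\<rangle> = - \<open>cnj tau\<close> \<langle>w, w\<rangle>\<close>.\<close>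
lemma tau_negative: "\<exists>t<0. tau = of_real t"
proof -
  obtain w x where w: "U w" and Sw: "\<And>y. y \<in> V \<Longrightarrow> S w y = g * w y" and x: "x \<in> V" "T w x \<noteq> 0"
    using g_vector_with_T_nonzero by blast
  obtain a where a: "a > 0" "inner_on V (T w) (T w) = of_real a"
    using inner_on_self_pos[of V x "T w", OF finite_V x] by blast
  obtain y where y: "y \<in> V" "w y \<noteq> 0"
  proof (rule ccontr)
    assume "\<not> thesis"
    then have "T w x = T (\<lambda>y. 0 * w y) x" using that by (intro T_cong) auto
    then show False using x(2) T_scale[of 0 w x] by simp
  qed
  obtain b where b: "b > 0" "inner_on V w w = of_real b"
    using inner_on_self_pos[of V y w, OF finite_V y] by blast
  have "of_real a = - inner_on V w (T (T w))" using a(2) T_skew_adjoint by simp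
  also have "inner_on V w (T (T w)) = inner_on V w (\<lambda>y. tau * w y)"
    by (rule inner_on_cong) (simp_all add: T_T_on_g[OF w Sw])
  also have "\<dots> = cnj tau * of_real b" unfolding inner_on_scale_right b(2) ..
  finally have "tau = of_real (- a / b)"
    using b(1) by (simp add: field_simps complex_eq_iff)
  then show ?thesis using a(1) b(1) by (intro exI[of _ "- a / b"]) simp
qed

lemma M_cnj: "M (\<lambda>y. cnj (f y)) x = cnj (M f x)"
  unfolding M_def S_cnj T_cnj by simp

lemma M_eigenvalue_cnj:
  assumes "\<mu> \<in> U_eigenvalues M"
  shows "cnj \<mu> \<in> U_eigenvalues M"
proof -
  obtain f x where "U f" "x \<in> V" "f x \<noteq> 0" and Mf: "\<And>y. y \<in> V \<Longrightarrow> M f y = \<mu> * f y"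
    using assms unfolding U_eigenvalues_def by auto
  then show ?thesis
    unfolding U_eigenvalues_def using U_cnj M_cnj
    by (intro CollectI exI[of _ "\<lambda>y. cnj (f y)"]) auto
qed

lemma M_eigenvalue_of_root:
  assumes w: "U w" and Sw: "\<And>y. y \<in> V \<Longrightarrow> S w y = g * w y"
    and c: "c\<^sup>2 = tau" and x: "x \<in> V" "T w x + c * w x \<noteq> 0"
  shows "(g + c) / 2 \<in> U_eigenvalues M"
proof -
  define u where "u = (\<lambda>y. 1 * T w y + c * w y)"
  have Tu: "T u y = c * u y" if "y \<in> V" for y
  proof -
    have "T (T w) y = c * (c * w y)" using T_T_on_g[OF w Sw that] c by (simp add: power2_eq_square)
    then show ?thesis unfolding u_def T_lincomb by (simp add: algebra_simps)
  qed
  have Su: "S u y = g * u y" if "y \<in> V" for y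
    unfolding u_def S_lincomb S_T[OF w that] Sw[OF that] by (simp add: algebra_simps)
  have "M u y = (g + c) / 2 * u y" if "y \<in> V" for y
    unfolding M_def Tu[OF that] Su[OF that] by (simp add: algebra_simps)
  moreover have "U u" unfolding u_def by (intro U_lincomb U_T w)
  ultimately show ?thesis using x unfolding U_eigenvalues_def u_def by auto
qed

lemma M_eigenvalues_eq:
  obtains \<sigma> where "Re \<sigma> = 0" "Im \<sigma> > 0" "U_eigenvalues M = {r / 2, (g + \<sigma>) / 2, (g - \<sigma>) / 2}"
proof -
  obtain t where t: "t < 0" "tau = of_real t" using tau_negative by blast
  define \<sigma> where "\<sigma> = \<i> * of_real (sqrt (- t))"
  have \<sigma>: "Re \<sigma> = 0" "Im \<sigma> > 0" "cnj \<sigma> = - \<sigma>" unfolding \<sigma>_def using t(1) by simp_all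
  have \<sigma>2: "\<sigma>\<^sup>2 = tau" "(- \<sigma>)\<^sup>2 = tau"
    unfolding \<sigma>_def t(2) using t(1) by (simp_all add: power_mult_distrib flip: of_real_power)
  obtain w x where w: "U w" and Sw: "\<And>y. y \<in> V \<Longrightarrow> S w y = g * w y" and x: "x \<in> V" "T w x \<noteq> 0"
    using g_vector_with_T_nonzero by blast
  have cnj_plus: "cnj ((g + \<sigma>) / 2) = (g - \<sigma>) / 2" and cnj_minus: "cnj ((g + - \<sigma>) / 2) = (g + \<sigma>) / 2"
    using g_real \<sigma>(3) by simp_all
  \<comment> \<open>Both vanish only if \<open>T w x = 0\<close>; complex conjugation then supplies the other root.\<close>
  consider "T w x + \<sigma> * w x \<noteq> 0" | "T w x + (- \<sigma>) * w x \<noteq> 0" using x(2) by force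
  then have pm: "(g + \<sigma>) / 2 \<in> U_eigenvalues M \<and> (g - \<sigma>) / 2 \<in> U_eigenvalues M"
  proof cases
    case 1
    have "(g + \<sigma>) / 2 \<in> U_eigenvalues M" by (rule M_eigenvalue_of_root[OF w Sw \<sigma>2(1) x(1) 1])
    then show ?thesis using M_eigenvalue_cnj cnj_plus by metis
  next
    case 2
    have "(g + - \<sigma>) / 2 \<in> U_eigenvalues M" by (rule M_eigenvalue_of_root[OF w Sw \<sigma>2(2) x(1) 2])
    then show ?thesis using M_eigenvalue_cnj cnj_minus by (metis diff_conv_add_uminus)
  qed
  have "U_eigenvalues M \<subseteq> {r / 2, (g + \<sigma>) / 2, (g - \<sigma>) / 2}"
  proof
    fix \<mu> assume "\<mu> \<in> U_eigenvalues M"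
    then have "\<mu> = r / 2 \<or> (2 * \<mu> - g)\<^sup>2 = \<sigma>\<^sup>2" using M_eigenvalue_cases \<sigma>2 by simp
    then have "\<mu> = r / 2 \<or> 2 * \<mu> - g = \<sigma> \<or> 2 * \<mu> - g = - \<sigma>" by (metis power2_eq_iff)
    then show "\<mu> \<in> {r / 2, (g + \<sigma>) / 2, (g - \<sigma>) / 2}" by (auto simp: field_simps)
  qed
  then have "U_eigenvalues M = {r / 2, (g + \<sigma>) / 2, (g - \<sigma>) / 2}"
    using r_half_M_eigenvalue pm by blast
  then show thesis using that \<sigma>(1,2) by blast
qed

theorem card_M_eigenvalues: "card (U_eigenvalues M) = 3"
proof -
  obtain \<sigma> where \<sigma>: "Re \<sigma> = 0" "Im \<sigma> > 0"
    and eq: "U_eigenvalues M = {r / 2, (g + \<sigma>) / 2, (g - \<sigma>) / 2}"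
    by (rule M_eigenvalues_eq)
  have "Im r = 0" "Im g = 0" using r_real g_real by (metis Im_complex_of_real Reals_cnj_iff complex_is_Real_iff)+
  then have "Im (r / 2) = 0" "Im ((g + \<sigma>) / 2) = Im \<sigma> / 2" "Im ((g - \<sigma>) / 2) = - Im \<sigma> / 2"
    by simp_all
  then have "r / 2 \<noteq> (g + \<sigma>) / 2" "r / 2 \<noteq> (g - \<sigma>) / 2" "(g + \<sigma>) / 2 \<noteq> (g - \<sigma>) / 2"
    using \<sigma>(2) by (auto dest!: arg_cong[where f = Im])
  then show ?thesis unfolding eq by simp
qed

end

section \<open>Schemes whose relation \<open>R\<^sub>i\<close> joins different blocks\<close>

lemma sum_atMost_4: "(\<Sum>l\<le>(4::nat). f l) = f 0 + f 1 + f 2 + f 3 + (f 4 :: 'b :: comm_monoid_add)"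
  by (simp add: eval_nat_numeral atMost_Suc add_ac)

locale cross_block_scheme = association_scheme X 4 R
  for X :: "'a set" and R :: "nat \<Rightarrow> ('a \<times> 'a) set" +
  fixes Cs :: "'a set set" and i j w :: nat
  assumes sym1: "(R 1)\<inverse> = R 1" and sym2: "(R 2)\<inverse> = R 2" and tr34: "(R 3)\<inverse> = R 4"
    and partition: "partition_on X Cs"
    and card_block: "C \<in> Cs \<Longrightarrow> card C = w"
    and two_blocks: "2 \<le> card Cs"
    and ij: "{i, j} = {1, 2}"
    and R_i: "R i = X \<times> X - same_block Cs"
    and R3_same_block: "R 3 \<subseteq> same_block Cs"
begin

lemma ij_cases: "i = 1 \<and> j = 2 \<or> i = 2 \<and> j = 1"
  using ij by (auto simp: doubleton_eq_iff)

lemma i_le: "i \<le> 4" and j_le: "j \<le> 4"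
  using ij_cases by auto

lemma R_j_sym: "(R j)\<inverse> = R j"
  using ij_cases sym1 sym2 by auto

lemma block_subset: "C \<in> Cs \<Longrightarrow> C \<subseteq> X"
  using partition by (auto simp: partition_on_def)

lemma block_nonempty: "C \<in> Cs \<Longrightarrow> C \<noteq> {}"
  using partition_onD3[OF partition] by auto

lemma finite_block: "C \<in> Cs \<Longrightarrow> finite C"
  using block_subset finite_X finite_subset by blast

lemma block_unique: "C \<in> Cs \<Longrightarrow> D \<in> Cs \<Longrightarrow> x \<in> C \<Longrightarrow> x \<in> D \<Longrightarrow> C = D"
  using partition unfolding partition_on_def disjoint_def by blast

lemma block_exists: "x \<in> X \<Longrightarrow> \<exists>C\<in>Cs. x \<in> C"
  using partition by (auto simp: partition_on_def)

lemma same_block_iff: "C \<in> Cs \<Longrightarrow> x \<in> C \<Longrightarrow> (x, y) \<in> same_block Cs \<longleftrightarrow> y \<in> C"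
  unfolding same_block_def using block_unique by blast

lemma R3_block: "C \<in> Cs \<Longrightarrow> (x, y) \<in> R 3 \<Longrightarrow> x \<in> C \<longleftrightarrow> y \<in> C"
  using R3_same_block same_block_iff unfolding same_block_def by blast

lemma R4_block: "C \<in> Cs \<Longrightarrow> (x, y) \<in> R 4 \<Longrightarrow> x \<in> C \<longleftrightarrow> y \<in> C"
  using R3_block tr34 by blast

abbreviation K :: nat where
  "K \<equiv> valency 3"

lemma valency_4: "valency 4 = K"
  using valency_converse[of 3 4] tr34 by simp

lemma A_i:
  assumes C: "C \<in> Cs" "x \<in> C"
  shows "A i v x = (\<Sum>y\<in>X. v y) - (\<Sum>y\<in>C. v y)"
proof -
  have "A i v x = (\<Sum>y\<in>X. if y \<in> X - C then v y else 0)"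
    unfolding adj_op_def R_i using C same_block_iff block_subset[OF C(1)] by (intro sum.cong) auto
  also have "\<dots> = (\<Sum>y\<in>X - C. v y)"
    using finite_X by (simp add: sum.If_cases Diff_eq Compl_eq)
  also have "\<dots> = (\<Sum>y\<in>X. v y) - (\<Sum>y\<in>C. v y)"
    using finite_X block_subset[OF C(1)] by (rule sum_diff)
  finally show ?thesis .
qed

definition balanced :: "('a \<Rightarrow> complex) \<Rightarrow> bool" where
  "balanced v \<longleftrightarrow> (\<forall>C\<in>Cs. (\<Sum>y\<in>C. v y) = 0)"

lemma sum_X_blocks: "(\<Sum>y\<in>X. v y) = (\<Sum>C\<in>Cs. \<Sum>y\<in>C. v y)"
  using sum.partition[OF finite_X partition] .

lemma sum_X_balanced: "balanced v \<Longrightarrow> (\<Sum>y\<in>X. v y) = 0"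
  unfolding sum_X_blocks balanced_def by simp

lemma A_i_balanced: "balanced v \<Longrightarrow> x \<in> X \<Longrightarrow> A i v x = 0"
  using A_i block_exists sum_X_balanced unfolding balanced_def by fastforce

lemma A_j_balanced:
  assumes v: "balanced v" and x: "x \<in> X"
  shows "A j v x = - v x - A 3 v x - A 4 v x"
proof -
  have "(\<Sum>l\<le>4. A l v x) = 0"
    using sum_A[OF x] sum_X_balanced[OF v] by simp
  then have "v x + A i v x + A j v x + A 3 v x + A 4 v x = 0"
    using ij_cases A_0[OF x] unfolding sum_atMost_4 by (auto simp: algebra_simps)
  then have sum0: "v x + A j v x + A 3 v x + A 4 v x = 0" using A_i_balanced[OF v x] by simp
  have "A j v x = (v x + A j v x + A 3 v x + A 4 v x) - v x - A 3 v x - A 4 v x" by simp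
  then show ?thesis unfolding sum0 by simp
qed

lemma isect_cross_zero:
  assumes "a \<in> {3, 4}" "b \<in> {3, 4}"
  shows "isect a b i = 0"
proof -
  obtain x y where xy: "(x, y) \<in> R i" using R_nonempty[OF i_le] by auto
  have empty: "{z\<in>X. (x, z) \<in> R a \<and> (z, y) \<in> R b} = {}"
  proof (rule ccontr)
    assume "{z\<in>X. (x, z) \<in> R a \<and> (z, y) \<in> R b} \<noteq> {}"
    then obtain z where z: "z \<in> X" "(x, z) \<in> R a" "(z, y) \<in> R b" by blast
    obtain C where C: "C \<in> Cs" "z \<in> C" using block_exists[OF z(1)] by blast
    have "x \<in> C" "y \<in> C" using z assms R3_block[OF C(1)] R4_block[OF C(1)] C(2) by auto
    then show False using xy C(1) same_block_iff unfolding R_i by blast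
  qed
  have "a \<le> 4" "b \<le> 4" using assms by auto
  from card_isect[OF this i_le xy] show ?thesis unfolding empty by simp
qed

lemma A_mult_balanced:
  assumes "a \<le> 4" "b \<le> 4" "balanced v" "x \<in> X"
  shows "A a (A b v) x = of_nat (isect a b 0) * v x + of_nat (isect a b 3) * A 3 v x
    + of_nat (isect a b 4) * A 4 v x - of_nat (isect a b j) * (v x + A 3 v x + A 4 v x)"
proof -
  have "A a (A b v) x = of_nat (isect a b 0) * A 0 v x + of_nat (isect a b i) * A i v x
      + of_nat (isect a b j) * A j v x + of_nat (isect a b 3) * A 3 v x + of_nat (isect a b 4) * A 4 v x"
    using A_mult[OF assms(1,2,4)] ij_cases unfolding sum_atMost_4 by (auto simp: algebra_simps)
  then show ?thesis
    unfolding A_0[OF assms(4)] A_i_balanced[OF assms(3,4)] A_j_balanced[OF assms(3,4)]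
    by (simp add: algebra_simps)
qed

lemma isect_3_4_identities:
  "isect 4 4 0 = isect 3 3 0" "isect 4 4 3 = isect 3 3 4" "isect 4 4 4 = isect 3 3 3"
  "isect 4 4 j = isect 3 3 j" "isect 3 4 4 = isect 3 4 3" "isect 4 3 4 = isect 3 4 3"
  "isect 4 3 3 = isect 3 4 3" "isect 4 3 0 = isect 3 4 0" "isect 4 3 j = isect 3 4 j"
proof -
  have R0: "(R 0)\<inverse> = R 0" unfolding R_0 by simp
  have tr43: "(R 4)\<inverse> = R 3" unfolding tr34[symmetric] by simp
  show "isect 4 4 0 = isect 3 3 0" by (rule isect_converse) (simp_all add: R0 tr34)
  show "isect 4 4 3 = isect 3 3 4" by (rule isect_converse) (simp_all add: tr34 tr43)
  show "isect 4 4 4 = isect 3 3 3" by (rule isect_converse) (simp_all add: tr34 tr43)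
  show "isect 4 4 j = isect 3 3 j" by (rule isect_converse) (simp_all add: tr34 R_j_sym j_le)
  show 5: "isect 3 4 4 = isect 3 4 3" by (rule isect_converse) (simp_all add: tr34 tr43)
  show 6: "isect 4 3 4 = isect 3 4 3" using isect_converse_comm[of 3 4] tr34 5 by simp
  have "isect 4 3 3 = isect 4 3 4" by (rule isect_converse) (simp_all add: tr34 tr43)
  then show 7: "isect 4 3 3 = isect 3 4 3" using 6 by simp
  show 8: "isect 4 3 0 = isect 3 4 0"
    using isect_valency[of 3 4] isect_valency[of 4 3] valency_4 tr34 tr43 by simp
  \<comment> \<open>Row sums of \<open>A 3 A 4\<close> and \<open>A 4 A 3\<close> agree, and all other coefficients already do.\<close>
  have "(\<Sum>l\<le>4. isect 3 4 l * valency l) = (\<Sum>l\<le>4. isect 4 3 l * valency l)"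
    using sum_isect_valency[of 3 4] sum_isect_valency[of 4 3] by simp
  then have "isect 3 4 j * valency j = isect 4 3 j * valency j"
    using ij_cases isect_cross_zero[of 3 4] isect_cross_zero[of 4 3] 5 6 7 8
    unfolding sum_atMost_4 by auto
  then show "isect 4 3 j = isect 3 4 j" using valency_pos[OF j_le] by simp
qed

lemma column_sum_A:
  assumes C: "C \<in> Cs" and a: "a \<in> {3, 4}"
  shows "(\<Sum>x\<in>C. A a v x) = of_nat K * (\<Sum>y\<in>C. v y)"
proof -
  have col: "card {x\<in>C. (x, y) \<in> R a} = (if y \<in> C then K else 0)" if y: "y \<in> X" for y
  proof -
    have "{x\<in>C. (x, y) \<in> R a} = (if y \<in> C then {x\<in>X. (x, y) \<in> R a} else {})"
      using a R3_block[OF C] R4_block[OF C] block_subset[OF C] by auto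
    then show ?thesis using card_R_column[OF _ y, of a] a valency_4 by auto
  qed
  have "(\<Sum>x\<in>C. A a v x) = (\<Sum>y\<in>X. of_nat (card {x\<in>C. (x, y) \<in> R a}) * v y)"
    unfolding adj_op_def using finite_block[OF C]
    by (subst sum.swap) (simp add: sum.If_cases Int_def sum_distrib_right[symmetric])
  also have "\<dots> = (\<Sum>y\<in>X. if y \<in> C then of_nat K * v y else 0)"
    using col by (intro sum.cong) auto
  also have "\<dots> = of_nat K * (\<Sum>y\<in>C. v y)"
    using finite_X block_subset[OF C] by (simp add: sum.If_cases Int_absorb1 sum_distrib_left)
  finally show ?thesis .
qed

lemma balanced_A: "balanced v \<Longrightarrow> a \<in> {3, 4} \<Longrightarrow> balanced (A a v)"
  unfolding balanced_def using column_sum_A by simp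

definition S :: "('a \<Rightarrow> complex) \<Rightarrow> 'a \<Rightarrow> complex" where
  "S v = (\<lambda>x. A 3 v x + A 4 v x)"

definition T :: "('a \<Rightarrow> complex) \<Rightarrow> 'a \<Rightarrow> complex" where
  "T v = (\<lambda>x. A 3 v x - A 4 v x)"

lemma S_T_relations:
  "\<exists>c0 c1 e0 e1 \<gamma>. \<forall>v x. balanced v \<longrightarrow> x \<in> X \<longrightarrow>
     S (S v) x = c1 * S v x + c0 * v x \<and> T (T v) x = e0 * v x + e1 * S v x \<and>
     S (T v) x = \<gamma> * T v x \<and> T (S v) x = \<gamma> * T v x"
proof (intro exI allI impI)
  fix v x assume v: "balanced v" and x: "x \<in> X"
  have le: "(3::nat) \<le> 4" "(4::nat) \<le> 4" by simp_all
  note prod = A_mult_balanced[OF le(1) le(1) v x] A_mult_balanced[OF le(1) le(2) v x]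
    A_mult_balanced[OF le(2) le(1) v x] A_mult_balanced[OF le(2) le(2) v x]
  let ?p = "\<lambda>a b l. (of_nat (isect a b l) :: complex)"
  show "S (S v) x = (?p 3 3 3 + ?p 3 3 4 + 2 * ?p 3 4 3 - 2 * (?p 3 3 j + ?p 3 4 j)) * S v x
      + (2 * ?p 3 3 0 + 2 * ?p 3 4 0 - 2 * (?p 3 3 j + ?p 3 4 j)) * v x \<and>
    T (T v) x = (2 * ?p 3 3 0 - 2 * ?p 3 4 0 - 2 * (?p 3 3 j - ?p 3 4 j)) * v x
      + (?p 3 3 3 + ?p 3 3 4 - 2 * ?p 3 4 3 - 2 * (?p 3 3 j - ?p 3 4 j)) * S v x \<and>
    S (T v) x = (?p 3 3 3 - ?p 3 3 4) * T v x \<and> T (S v) x = (?p 3 3 3 - ?p 3 3 4) * T v x"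
    unfolding S_def T_def adj_op_add adj_op_diff prod isect_3_4_identities
    by (simp add: algebra_simps)
qed

lemma A_delta_diff:
  assumes "a \<in> X" "b \<in> X"
  shows "A l (\<lambda>t. (if t = a then 1 else 0) - (if t = b then 1 else 0)) x
    = (if (x, a) \<in> R l then 1 else 0) - (if (x, b) \<in> R l then 1 else 0)"
  unfolding adj_op_diff adj_op_indicator[OF finite_X assms(1)] adj_op_indicator[OF finite_X assms(2)] ..

lemma balanced_delta_diff:
  assumes "(a, b) \<in> same_block Cs"
  shows "balanced (\<lambda>t. (if t = a then 1 else 0) - (if t = b then 1 else 0))"
  unfolding balanced_def
proof
  fix D assume D: "D \<in> Cs"
  have "a \<in> D \<longleftrightarrow> b \<in> D" using assms D block_unique unfolding same_block_def by blast
  then show "(\<Sum>t\<in>D. (if t = a then 1 else 0) - (if t = b then 1 else 0)) = (0::complex)"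
    using finite_block[OF D] by (simp add: sum_subtractf)
qed

lemma not_R34_diag: "x \<in> X \<Longrightarrow> (x, x) \<notin> R 3 \<and> (x, x) \<notin> R 4"
  using R_unique[of 0 3 x x] R_unique[of 0 4 x x] R_0 by auto

text \<open>Test vectors \<open>\<delta>\<^sub>x - \<delta>\<^sub>y\<close>: \<open>S\<close> kills the one with \<open>(x, y) \<in> R j\<close> at \<open>x\<close>,
  but not the one with \<open>(x, z) \<in> R 3\<close>.\<close>
lemma S_not_scalar: "\<nexists>c. \<forall>v. balanced v \<longrightarrow> (\<forall>x\<in>X. S v x = c * v x)"
proof
  assume "\<exists>c. \<forall>v. balanced v \<longrightarrow> (\<forall>x\<in>X. S v x = c * v x)"
  then obtain c where c: "\<And>v x. balanced v \<Longrightarrow> x \<in> X \<Longrightarrow> S v x = c * v x" by blast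
  obtain x y where xy: "(x, y) \<in> R j" using R_nonempty[OF j_le] by auto
  have X: "x \<in> X" "y \<in> X" using xy R_subset[OF j_le] by auto
  have "x \<noteq> y"
  proof
    assume "x = y"
    then have "j = 0" using R_unique[OF j_le _ xy, of 0] R_0 X by auto
    then show False using ij_cases by simp
  qed
  have "(x, y) \<notin> R i" using R_unique[OF i_le j_le _ xy] ij_cases by auto
  then have "(x, y) \<in> same_block Cs" using R_i X by blast
  have xy34: "(x, y) \<notin> R 3" "(x, y) \<notin> R 4"
    using R_unique[of 3 j x y] R_unique[of 4 j x y] xy j_le ij_cases by auto
  have "card {z\<in>X. (x, z) \<in> R 3} \<noteq> 0" using card_R_row[of 3 x] valency_pos[of 3] X by simp
  then have "{z\<in>X. (x, z) \<in> R 3} \<noteq> {}" by (metis card.empty)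
  then obtain z where z: "z \<in> X" "(x, z) \<in> R 3" by blast
  then have "x \<noteq> z" "(x, z) \<notin> R 4" using not_R34_diag X R_unique[of 3 4 x z] by auto
  have "c = 0"
    using c[OF balanced_delta_diff[OF \<open>(x, y) \<in> same_block Cs\<close>] X(1)] \<open>x \<noteq> y\<close> xy34
      not_R34_diag[OF X(1)]
    by (simp add: S_def A_delta_diff X)
  moreover have "c = -1"
    using c[OF balanced_delta_diff[of x z] X(1)] R3_same_block \<open>x \<noteq> z\<close> z \<open>(x, z) \<notin> R 4\<close>
      not_R34_diag[OF X(1)]
    by (auto simp: S_def A_delta_diff X)
  ultimately show False by simp
qed

lemma T_nonzero: "\<exists>v. balanced v \<and> (\<exists>x\<in>X. T v x \<noteq> 0)"
proof -
  obtain x y where xy: "(x, y) \<in> R 3" using R_nonempty[of 3] by auto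
  have X: "x \<in> X" "y \<in> X" using xy R_subset[of 3] by auto
  have "(x, y) \<notin> R 4" using xy R_unique[of 3 4 x y] by auto
  then have "T (\<lambda>t. (if t = x then 1 else 0) - (if t = y then 1 else 0)) x = -1"
    using xy not_R34_diag[OF X(1)] by (simp add: T_def A_delta_diff X)
  then show ?thesis using balanced_delta_diff[of x y] R3_same_block xy X by force
qed

lemma S_self_adjoint: "inner_on X (S f) h = inner_on X f (S h)"
  and T_skew_adjoint: "inner_on X (T f) h = - inner_on X f (T h)"
proof -
  have tr43: "(R 4)\<inverse> = R 3" unfolding tr34[symmetric] by simp
  show "inner_on X (S f) h = inner_on X f (S h)"
    unfolding S_def inner_on_add_left inner_on_add_right inner_on_adj_op tr34 tr43 by simp
  show "inner_on X (T f) h = - inner_on X f (T h)"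
    unfolding T_def inner_on_diff_left inner_on_diff_right inner_on_adj_op tr34 tr43 by simp
qed

lemma sym_skew_pair_S_T:
  obtains c0 c1 e0 e1 \<gamma> where "sym_skew_pair X balanced S T c1 c0 e0 e1 \<gamma>"
proof -
  obtain c0 c1 e0 e1 \<gamma> where rel: "\<And>v x. balanced v \<Longrightarrow> x \<in> X \<Longrightarrow>
     S (S v) x = c1 * S v x + c0 * v x \<and> T (T v) x = e0 * v x + e1 * S v x \<and>
     S (T v) x = \<gamma> * T v x \<and> T (S v) x = \<gamma> * T v x"
    using S_T_relations by blast
  have balanced_lincomb: "balanced (\<lambda>y. a * f y + b * h y)" if "balanced f" "balanced h" for a b f h
    using that unfolding balanced_def by (simp add: sum.distrib sum_distrib_left[symmetric])
  show thesis
  proof (rule that, unfold_locales)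
    show "finite X" by (rule finite_X)
    show "balanced (\<lambda>y. a * f y + b * h y)" if "balanced f" "balanced h" for a b f h
      using balanced_lincomb that .
    show "balanced (\<lambda>y. cnj (f y))" if "balanced f" for f
      using that unfolding balanced_def by (metis cnj_sum complex_cnj_zero)
    show "balanced (S f)" "balanced (T f)" if "balanced f" for f
      using balanced_lincomb[OF balanced_A balanced_A, of f 3 f 4 1 1]
        balanced_lincomb[OF balanced_A balanced_A, of f 3 f 4 1 "-1"] that
      by (simp_all add: S_def T_def)
    show "S (\<lambda>y. a * f y + b * h y) x = a * S f x + b * S h x"
      and "T (\<lambda>y. a * f y + b * h y) x = a * T f x + b * T h x" for a b f h x
      unfolding S_def T_def adj_op_lincomb by (simp_all add: algebra_simps)
    show "S f x = S h x" and "T f x = T h x" if "\<And>y. y \<in> X \<Longrightarrow> f y = h y" for f h x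
      unfolding S_def T_def using adj_op_cong[where V = X and f = f and g = h, OF that] by simp_all
    show "S (\<lambda>y. cnj (f y)) x = cnj (S f x)" and "T (\<lambda>y. cnj (f y)) x = cnj (T f x)" for f x
      unfolding S_def T_def adj_op_cnj by simp_all
  qed (use S_self_adjoint T_skew_adjoint rel S_not_scalar T_nonzero in auto)
qed

definition balanced_eigenvalues :: "complex set" where
  "balanced_eigenvalues = {\<mu>. \<exists>v. balanced v \<and> (\<exists>x\<in>X. v x \<noteq> 0) \<and> (\<forall>x\<in>X. A 3 v x = \<mu> * v x)}"

lemma card_balanced_eigenvalues: "card balanced_eigenvalues = 3"
proof -
  obtain c0 c1 e0 e1 \<gamma> where "sym_skew_pair X balanced S T c1 c0 e0 e1 \<gamma>" by (rule sym_skew_pair_S_T)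
  then interpret sp: sym_skew_pair X balanced S T c1 c0 e0 e1 \<gamma> .
  have "sp.M = A 3" by (simp add: fun_eq_iff sp.M_def S_def T_def)
  then have "balanced_eigenvalues = sp.U_eigenvalues sp.M"
    unfolding balanced_eigenvalues_def sp.U_eigenvalues_def by simp
  then show ?thesis using sp.card_M_eigenvalues by simp
qed

lemma adj_op_R_i_R_3: "adj_op X (R i \<union> R 3) v x = A i v x + A 3 v x"
proof (rule adj_op_Un)
  show "R i \<inter> R 3 = {}" using R_unique[of i 3] i_le ij_cases by fastforce
qed

lemma card_X: "card X = card Cs * w"
  using sum.partition[OF finite_X partition, of "\<lambda>_. 1 :: nat"] card_block by simp

lemma A_3_block_const:
  assumes C: "C \<in> Cs" "x \<in> C" and v: "\<And>y. y \<in> C \<Longrightarrow> v y = c"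
  shows "A 3 v x = of_nat K * c"
proof -
  have "A 3 v x = A 3 (\<lambda>_. c) x"
    unfolding adj_op_def by (rule sum.cong) (use R3_block[OF C(1)] C(2) v in auto)
  then show ?thesis using A_const[of 3 x c] C block_subset by auto
qed

lemma block_size_bound: "2 * K + 1 \<le> w"
proof -
  obtain x where x: "x \<in> X" using X_nonempty by blast
  obtain C where C: "C \<in> Cs" "x \<in> C" using block_exists[OF x] by blast
  define N3 where "N3 = {y\<in>X. (x, y) \<in> R 3}"
  define N4 where "N4 = {y\<in>X. (x, y) \<in> R 4}"
  have sub: "insert x (N3 \<union> N4) \<subseteq> C"
    using C R3_block[OF C(1)] R4_block[OF C(1)] unfolding N3_def N4_def by auto
  have disj: "N3 \<inter> N4 = {}" "x \<notin> N3 \<union> N4"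
    unfolding N3_def N4_def using R_unique[of 3 4 x] not_R34_diag[OF x] by auto
  have fin: "finite N3" "finite N4" unfolding N3_def N4_def using finite_X by auto
  have "card (insert x (N3 \<union> N4)) = 1 + (K + K)"
    using fin disj card_R_row[of 3 x] card_R_row[of 4 x] valency_4 x
    unfolding N3_def N4_def by (simp add: card_Un_disjoint)
  then have "1 + (K + K) \<le> card C" using card_mono[OF finite_block[OF C(1)] sub] by simp
  then show ?thesis using card_block[OF C(1)] by simp
qed

lemma norm_balanced_eigenvalue_le:
  assumes "\<mu> \<in> balanced_eigenvalues"
  shows "cmod \<mu> \<le> K"
proof -
  obtain v where v: "\<exists>x\<in>X. v x \<noteq> 0" and ev: "\<And>x. x \<in> X \<Longrightarrow> A 3 v x = \<mu> * v x"
    using assms unfolding balanced_eigenvalues_def by auto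
  define m where "m = Max ((\<lambda>x. cmod (v x)) ` X)"
  have "m \<in> (\<lambda>x. cmod (v x)) ` X" unfolding m_def using finite_X X_nonempty by (intro Max_in) auto
  then obtain x0 where x0: "x0 \<in> X" "cmod (v x0) = m" by auto
  have le_m: "cmod (v y) \<le> m" if "y \<in> X" for y unfolding m_def using finite_X that by auto
  have "m > 0" using v le_m by (metis less_le_trans zero_less_norm_iff)
  have "cmod \<mu> * m = cmod (A 3 v x0)" using ev[OF x0(1)] x0(2) by (simp add: norm_mult)
  also have "\<dots> \<le> K * m"
    using norm_adj_op_le[where v = v and E = "R 3" and x = x0, OF finite_X le_m] card_R_row[OF _ x0(1), of 3]
    by simp
  finally show ?thesis using \<open>m > 0\<close> by simp
qed

lemma block_sum_eigenvector:
  assumes ev: "\<And>x. x \<in> X \<Longrightarrow> A i v x + A 3 v x = \<mu> * v x" and C: "C \<in> Cs"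
  shows "\<mu> * (\<Sum>y\<in>C. v y)
    = of_nat w * (\<Sum>y\<in>X. v y) - of_nat w * (\<Sum>y\<in>C. v y) + of_nat K * (\<Sum>y\<in>C. v y)"
proof -
  have "\<mu> * (\<Sum>y\<in>C. v y) = (\<Sum>x\<in>C. A i v x + A 3 v x)"
    unfolding sum_distrib_left using ev block_subset[OF C] by (intro sum.cong) auto
  also have "\<dots> = (\<Sum>x\<in>C. A i v x) + (\<Sum>x\<in>C. A 3 v x)" by (rule sum.distrib)
  also have "(\<Sum>x\<in>C. A i v x) = (\<Sum>x\<in>C. (\<Sum>y\<in>X. v y) - (\<Sum>y\<in>C. v y))"
    using A_i[OF C] by simp
  finally show ?thesis using column_sum_A[OF C, of 3 v] card_block[OF C] by (simp add: algebra_simps)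
qed

lemma adj_eigenvalue_cases:
  assumes "\<mu> \<in> adj_eigenvalues X (R i \<union> R 3)"
  shows "\<mu> \<in> balanced_eigenvalues \<or> \<mu> = of_nat (card X) - of_nat w + of_nat K \<or> \<mu> = of_nat K - of_nat w"
proof -
  obtain v where v: "\<exists>x\<in>X. v x \<noteq> 0" and ev: "\<And>x. x \<in> X \<Longrightarrow> A i v x + A 3 v x = \<mu> * v x"
    using assms unfolding adj_eigenvalues_eq adj_op_R_i_R_3 by auto
  define \<sigma> where "\<sigma> = (\<Sum>y\<in>X. v y)"
  have block: "\<mu> * (\<Sum>y\<in>C. v y) = of_nat w * \<sigma> - of_nat w * (\<Sum>y\<in>C. v y) + of_nat K * (\<Sum>y\<in>C. v y)"
    if "C \<in> Cs" for C
    using block_sum_eigenvector[of v \<mu> C] ev that unfolding \<sigma>_def by blast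
  consider "balanced v" | C0 where "C0 \<in> Cs" "(\<Sum>y\<in>C0. v y) \<noteq> 0" "\<sigma> = 0" | "\<sigma> \<noteq> 0"
    unfolding balanced_def by blast
  then show ?thesis
  proof cases
    case 1
    then have "\<mu> \<in> balanced_eigenvalues"
      using v ev A_i_balanced unfolding balanced_eigenvalues_def by auto
    then show ?thesis by simp
  next
    case 2
    then have "\<mu> * (\<Sum>y\<in>C0. v y) = (of_nat K - of_nat w) * (\<Sum>y\<in>C0. v y)"
      using block[OF 2(1)] by (simp add: algebra_simps)
    then show ?thesis using 2(2) by simp
  next
    case 3
    have "\<mu> * \<sigma> = (\<Sum>C\<in>Cs. \<mu> * (\<Sum>y\<in>C. v y))"
      unfolding \<sigma>_def sum_X_blocks sum_distrib_left ..
    also have "\<dots> = (\<Sum>C\<in>Cs. of_nat w * \<sigma> - of_nat w * (\<Sum>y\<in>C. v y) + of_nat K * (\<Sum>y\<in>C. v y))"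
      using block by simp
    also have "\<dots> = (of_nat (card X) - of_nat w + of_nat K) * \<sigma>"
      unfolding card_X sum.distrib sum_subtractf sum_distrib_left[symmetric]
      by (simp add: \<sigma>_def sum_X_blocks algebra_simps)
    finally show ?thesis using 3 by simp
  qed
qed

lemma balanced_eigenvalues_subset: "balanced_eigenvalues \<subseteq> adj_eigenvalues X (R i \<union> R 3)"
  unfolding balanced_eigenvalues_def adj_eigenvalues_eq adj_op_R_i_R_3 using A_i_balanced by auto

lemma all_ones_eigenvalue: "of_nat (card X) - of_nat w + of_nat K \<in> adj_eigenvalues X (R i \<union> R 3)"
proof -
  have "A i (\<lambda>_. 1) x + A 3 (\<lambda>_. 1) x = of_nat (card X) - of_nat w + of_nat K" if x: "x \<in> X" for x
  proof -
    obtain C where C: "C \<in> Cs" "x \<in> C" using block_exists[OF x] by blast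
    show ?thesis using A_i[OF C, of "\<lambda>_. 1"] A_const[of 3 x 1] card_block[OF C(1)] x by simp
  qed
  then show ?thesis unfolding adj_eigenvalues_eq adj_op_R_i_R_3
    by (intro CollectI exI[of _ "\<lambda>_. 1"]) (use X_nonempty in auto)
qed

lemma two_blocks_eigenvalue: "of_nat K - of_nat w \<in> adj_eigenvalues X (R i \<union> R 3)"
proof -
  obtain C1 C2 where C12: "C1 \<in> Cs" "C2 \<in> Cs" "C1 \<noteq> C2"
    using two_blocks by (rule two_le_card_obtains)
  define f :: "'a set \<Rightarrow> complex" where "f C = (if C = C1 then 1 else 0) - (if C = C2 then 1 else 0)" for C
  define v where "v y = (if y \<in> C1 then 1 else 0) - (if y \<in> C2 then 1 else (0 :: complex))" for y
  have v_block: "v y = f C" if "C \<in> Cs" "y \<in> C" for C y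
    unfolding v_def f_def using block_unique[OF that(1) C12(1) that(2)] block_unique[OF that(1) C12(2) that(2)]
    that(2) by auto
  have "(\<Sum>y\<in>X. v y) = (\<Sum>C\<in>Cs. of_nat w * f C)"
    unfolding sum_X_blocks using v_block card_block by simp
  also have "\<dots> = 0"
    using C12 finite_X partition by (simp add: f_def sum_subtractf sum_distrib_left[symmetric] finite_elements)
  finally have sum0: "(\<Sum>y\<in>X. v y) = 0" .
  have "A i v x + A 3 v x = (of_nat K - of_nat w) * v x" if x: "x \<in> X" for x
  proof -
    obtain C where C: "C \<in> Cs" "x \<in> C" using block_exists[OF x] by blast
    have "A i v x = - of_nat w * f C" using A_i[OF C, of v] sum0 v_block[OF C(1)] card_block[OF C(1)] by simp
    moreover have "A 3 v x = of_nat K * f C" using A_3_block_const[OF C] v_block[OF C(1)] by simp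
    ultimately show ?thesis using v_block[OF C] by (simp add: algebra_simps)
  qed
  moreover obtain x where "x \<in> C1" using block_nonempty[OF C12(1)] by blast
  then have "x \<in> X" "v x \<noteq> 0" using C12 block_subset v_block[OF C12(1)] unfolding f_def by auto
  ultimately show ?thesis unfolding adj_eigenvalues_eq adj_op_R_i_R_3 by auto
qed

theorem card_adj_eigenvalues: "card (adj_eigenvalues X (R i \<union> R 3)) = 5"
proof -
  define \<alpha> :: complex where "\<alpha> = of_nat (card X) - of_nat w + of_nat K"
  define \<beta> :: complex where "\<beta> = of_nat K - of_nat w"
  have eq: "adj_eigenvalues X (R i \<union> R 3) = insert \<alpha> (insert \<beta> balanced_eigenvalues)"
    using adj_eigenvalue_cases balanced_eigenvalues_subset all_ones_eigenvalue two_blocks_eigenvalue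
    unfolding \<alpha>_def \<beta>_def by blast
  have "2 * w \<le> card X" using card_X two_blocks by (simp add: mult_le_mono1)
  moreover have "2 * K + 1 \<le> w" by (rule block_size_bound)
  moreover have "\<alpha> = of_real (real (card X) - real w + real K)" "\<beta> = of_real (real K - real w)"
    unfolding \<alpha>_def \<beta>_def by simp_all
  ultimately have "cmod \<alpha> > K" "cmod \<beta> > K" "\<alpha> \<noteq> \<beta>"
    by (simp_all only: norm_of_real of_real_eq_iff)
  then have "\<alpha> \<notin> balanced_eigenvalues" "\<beta> \<notin> balanced_eigenvalues" "\<alpha> \<noteq> \<beta>"
    using norm_balanced_eigenvalue_le by fastforce+
  moreover have "finite balanced_eigenvalues" using card_balanced_eigenvalues card.infinite by fastforce
  ultimately show ?thesis unfolding eq using card_balanced_eigenvalues by simp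
qed

end

section \<open>Identifying the cross-component relation\<close>

text \<open>By connectivity, a class meeting "same block" lies inside it. So \<open>R 0\<close>, \<open>R 3\<close>, \<open>R 4\<close> and
  the class \<open>R j\<close> of a non-edge inside a block lie inside "same block", and the class \<open>R i\<close> of a
  pair in different blocks is disjoint from it; as there are only five classes, \<open>R i\<close> is the
  whole complement.\<close>
lemma cross_block_relation:
  assumes scheme: "assoc_scheme X 4 R"
    and partition: "partition_on X Cs" and two_blocks: "2 \<le> card Cs"
    and E_blocks: "R 3 \<union> R 4 \<subseteq> same_block Cs"
    and connected: "\<And>C. C \<in> Cs \<Longrightarrow> graph_connected C ((R 3 \<union> R 4) \<inter> C \<times> C)"
    and non_complete: "\<And>C. C \<in> Cs \<Longrightarrow> \<exists>x\<in>C. \<exists>y\<in>C. x \<noteq> y \<and> (x, y) \<notin> R 3 \<union> R 4"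
  obtains i j where "{i, j} = {1, 2}" "R i = X \<times> X - same_block Cs"
proof -
  interpret association_scheme X 4 R by (rule association_scheme.intro[OF scheme])
  let ?W = "same_block Cs"
  have closed: "R l \<subseteq> ?W" if "l \<le> 4" "(x, y) \<in> R l" "(x, y) \<in> ?W" for l x y
    using class_within_blocks[of "{3, 4}" Cs l x y] that partition E_blocks connected by simp
  have block_X: "C \<subseteq> X" if "C \<in> Cs" for C using partition that by (auto simp: partition_on_def)
  have R034_W: "R 0 \<subseteq> ?W" "R 3 \<subseteq> ?W" "R 4 \<subseteq> ?W"
    using E_blocks R_0 partition unfolding same_block_def partition_on_def by auto
  obtain C1 C2 where C12: "C1 \<in> Cs" "C2 \<in> Cs" "C1 \<noteq> C2" using two_blocks by (rule two_le_card_obtains)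
  obtain x0 y0 where xy0: "x0 \<in> C1" "y0 \<in> C1" "x0 \<noteq> y0" "(x0, y0) \<notin> R 3 \<union> R 4"
    using non_complete[OF C12(1)] by blast
  obtain j where j: "j \<le> 4" "(x0, y0) \<in> R j" using R_cover xy0 block_X[OF C12(1)] by blast
  have "(x0, y0) \<notin> R 0" "(x0, y0) \<notin> R 3" "(x0, y0) \<notin> R 4" using xy0(3,4) R_0 by auto
  then have "j \<notin> {0, 3, 4}" using j(2) by blast
  have R_j_W: "R j \<subseteq> ?W" using closed[OF j] xy0 C12(1) unfolding same_block_def by blast
  have "C1 \<noteq> {}" "C2 \<noteq> {}" using C12 partition_onD3[OF partition] by auto
  then obtain x1 y1 where x1: "x1 \<in> C1" and y1: "y1 \<in> C2" by blast
  have block_unique: "C = D" if "C \<in> Cs" "D \<in> Cs" "x \<in> C" "x \<in> D" for C D x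
    using partition that unfolding partition_on_def disjoint_def by blast
  have "x1 \<in> X" "y1 \<in> X" using x1 y1 block_X C12 by auto
  moreover have "(x1, y1) \<notin> ?W" using block_unique C12 x1 y1 unfolding same_block_def by blast
  ultimately have x1y1: "(x1, y1) \<in> X \<times> X - ?W" by blast
  then obtain i where i: "i \<le> 4" "(x1, y1) \<in> R i" using R_cover by blast
  have "i \<notin> {0, 3, 4, j}" using i(2) x1y1 R034_W R_j_W by blast
  have "R i \<inter> ?W = {}"
  proof (rule ccontr)
    assume "R i \<inter> ?W \<noteq> {}"
    then obtain x y where "(x, y) \<in> R i" "(x, y) \<in> ?W" by auto
    then show False using closed[OF i(1)] i(2) x1y1 by blast
  qed
  moreover have "p \<in> R i" if p: "p \<in> X \<times> X - ?W" for p
  proof -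
    obtain l where l: "l \<le> 4" "p \<in> R l" using R_cover p by (cases p) blast
    moreover have "l \<notin> {0, 3, 4, j}" using l(2) p R034_W R_j_W by blast
    ultimately have "l = i" using i(1) \<open>i \<notin> {0, 3, 4, j}\<close> j(1) \<open>j \<notin> {0, 3, 4}\<close> by auto
    then show ?thesis using l by simp
  qed
  ultimately have "R i = X \<times> X - ?W" using R_subset[OF i(1)] by blast
  moreover have "{i, j} = {1, 2}"
    using i(1) j(1) \<open>i \<notin> {0, 3, 4, j}\<close> \<open>j \<notin> {0, 3, 4}\<close> by auto
  ultimately show thesis using that by blast
qed

theorem proposition4p7:
  fixes X :: "'a set" and R :: "nat \<Rightarrow> ('a \<times> 'a) set"
    and Cs :: "'a set set" and N k w :: nat and r s :: real
  assumes scheme: "assoc_scheme X 4 R"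
    and sym1: "(R 1)\<inverse> = R 1" and sym2: "(R 2)\<inverse> = R 2" and tr34: "(R 3)\<inverse> = R 4"
    and union: "disjoint_union_of X (R 3 \<union> R 4) Cs"
    and N: "card Cs = N" "N > 1"
    and comps: "\<forall>C\<in>Cs. graph_connected C ((R 3 \<union> R 4) \<inter> C \<times> C)
                  \<and> srg_valency C ((R 3 \<union> R 4) \<inter> C \<times> C) k
                  \<and> adj_eigenvalues C ((R 3 \<union> R 4) \<inter> C \<times> C) = complex_of_real ` {real k, r, s}
                  \<and> card C = w"
    and rk: "r \<noteq> real k" and sk: "s \<noteq> real k"
  shows "\<exists>i\<in>{1, 2, 3::nat}. card (adj_eigenvalues X (R i \<union> R 3)) = 5"
proof -
  have connected: "graph_connected C ((R 3 \<union> R 4) \<inter> C \<times> C)"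
    and non_complete: "\<exists>x\<in>C. \<exists>y\<in>C. x \<noteq> y \<and> (x, y) \<notin> R 3 \<union> R 4"
    and card_block: "card C = w" if "C \<in> Cs" for C
    using bspec[OF comps that] srg_valency_non_complete by blast+
  note partition = disjoint_union_of_partition[OF union]
  obtain i j where ij: "{i, j} = {1, 2}" and R_i: "R i = X \<times> X - same_block Cs"
    using cross_block_relation[OF scheme partition(1) _ partition(2) connected non_complete] N by auto
  interpret cross_block_scheme X R Cs i j w
  proof unfold_locales
    show "2 \<le> card Cs" using N by simp
    show "R 3 \<subseteq> same_block Cs" using partition(2) by blast
  qed (fact scheme sym1 sym2 tr34 partition(1) card_block ij R_i)+
  have "i \<in> {1, 2, 3}" using ij_cases by auto
  then show ?thesis using card_adj_eigenvalues by blast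
qed

end
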